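(* Let $\mathbb{F}$ be an infinite field. Let $I,J,K,I',J',K'$ be finite sets, $\Lambda\subseteq I\times J\times K$, and let $f:I\to I'$, $g:J\to J'$, $h:K\to K'$ be functions. Then $R_s(\langle\Lambda\rangle)\ge R_s(\langle(f\times g\times h)(\Lambda)\rangle)$.
   Context: For finite sets $I,J,K$ and $\Lambda\subseteq I\times J\times K$, $\langle\Lambda\rangle=\{((i,j),(j,k),(k,i))\in(I\times J)\times(J\times K)\times(K\times I): (i,j,k)\in\Lambda\}$. A tensor over $\mathbb{F}$ is a trilinear form $T=\sum t_{a,b,c}x_ay_bz_c$ with variables indexed by finite sets $A,B,C$; its support is $\{(a,b,c):t_{a,b,c}\neq0\}$; its rank $R(T)$ is the minimal number of products of three linear forms (one in each set of variables) summing to $T$. For $\Phi\subseteq A\times B\times C$, the support rank is $R_s(\Phi)=\min\{R(T):\operatorname{supp}(T)=\Phi\}$. *)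

theory Defs
  imports Main
begin

definition tsupp :: "('a \<Rightarrow> 'b \<Rightarrow> 'c \<Rightarrow> 'f::zero) \<Rightarrow> ('a \<times> 'b \<times> 'c) set" where
  "tsupp t = {(a, b, c). t a b c \<noteq> 0}"

definition tensor_rank :: "('a \<Rightarrow> 'b \<Rightarrow> 'c \<Rightarrow> 'f::field) \<Rightarrow> nat" where
  "tensor_rank t = (LEAST r. \<exists>u v w. \<forall>a b c.
      t a b c = (\<Sum>l<r. u l a * v l b * w l c))"

definition support_rank :: "'f::field itself \<Rightarrow> ('a \<times> 'b \<times> 'c) set \<Rightarrow> nat" where
  "support_rank _ \<Phi> = (LEAST r. \<exists>t :: 'a \<Rightarrow> 'b \<Rightarrow> 'c \<Rightarrow> 'f. tsupp t = \<Phi> \<and> tensor_rank t = r)"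

definition bracket :: "('i \<times> 'j \<times> 'k) set \<Rightarrow> (('i \<times> 'j) \<times> ('j \<times> 'k) \<times> ('k \<times> 'i)) set" where
  "bracket \<Lambda> = {((i, j), (j, k), (k, i)) | i j k. (i, j, k) \<in> \<Lambda>}"

end

theory Submission
  imports Defs "HOL-Computational_Algebra.Polynomial"
begin

text \<open>Take \<open>T\<close> of minimal rank with support \<open>\<Phi> = \<langle>\<Lambda>\<rangle>\<close>, rescale it by \<open>\<alpha>(x) \<beta>(y)\<close> and push
it forward along the coordinate maps; neither operation increases the rank. Each coefficient
of the pushforward is a sum over a fibre of \<open>\<Phi>\<close> and might vanish by cancellation. But an
element of \<open>\<langle>\<Lambda>\<rangle>\<close> is determined by its first two coordinates, so with
\<open>\<alpha>(x) \<beta>(y) = \<xi> ^ e(x, y)\<close> for an injective exponent \<open>e\<close> every fibre sum is a nonzero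
polynomial in \<open>\<xi>\<close>. Over an infinite field some \<open>\<xi>\<close> is a root of none of them, and then the
support of the pushforward is exactly the image of \<open>\<Phi>\<close>.\<close>

lemma tensor_rank_le:
  fixes t :: "'a \<Rightarrow> 'b \<Rightarrow> 'c \<Rightarrow> 'f::field"
  assumes "\<And>a b c. t a b c = (\<Sum>l<r. u l a * v l b * w l c)"
  shows "tensor_rank t \<le> r"
  unfolding tensor_rank_def using assms by (intro Least_le) blast

lemma finite_tsupp_imp_decomposition:
  fixes t :: "'a \<Rightarrow> 'b \<Rightarrow> 'c \<Rightarrow> 'f::field"
  assumes "finite (tsupp t)"
  shows "\<exists>(r::nat) u v w. \<forall>a b c. t a b c = (\<Sum>l<r. u l a * v l b * w l c)"
proof -
  obtain e where e: "bij_betw e {..<card (tsupp t)} (tsupp t)"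
    using ex_bij_betw_nat_finite[OF assms] by (auto simp: atLeast0LessThan)
  define u where "u l a = (case e l of (a0, b0, c0) \<Rightarrow> if a = a0 then t a0 b0 c0 else 0)" for l a
  define v where "v l b = (if b = fst (snd (e l)) then 1 else 0 :: 'f)" for l b
  define w where "w l c = (if c = snd (snd (e l)) then 1 else 0 :: 'f)" for l c
  have decomposition: "t a b c = (\<Sum>l<card (tsupp t). u l a * v l b * w l c)" for a b c
  proof -
    have "t a b c = (\<Sum>\<phi>\<in>tsupp t. if \<phi> = (a, b, c) then t a b c else 0)"
      using assms by (auto simp: tsupp_def)
    also have "\<dots> = (\<Sum>l<card (tsupp t). if e l = (a, b, c) then t a b c else 0)"
      by (rule sum.reindex_bij_betw[OF e, symmetric])
    also have "\<dots> = (\<Sum>l<card (tsupp t). u l a * v l b * w l c)"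
      by (intro sum.cong refl) (auto simp: u_def v_def w_def split: prod.split)
    finally show ?thesis .
  qed
  show ?thesis using decomposition by blast
qed

lemma tensor_rank_decomposition:
  fixes t :: "'a \<Rightarrow> 'b \<Rightarrow> 'c \<Rightarrow> 'f::field"
  assumes "finite (tsupp t)"
  obtains u v w where "\<And>a b c. t a b c = (\<Sum>l<tensor_rank t. u l a * v l b * w l c)"
  using LeastI_ex[OF finite_tsupp_imp_decomposition[OF assms]] that
  unfolding tensor_rank_def by blast

lemma support_rank_attained:
  obtains t :: "'a \<Rightarrow> 'b \<Rightarrow> 'c \<Rightarrow> 'f::field"
  where "tsupp t = \<Phi>" "tensor_rank t = support_rank TYPE('f) \<Phi>"
proof -
  have "tsupp (\<lambda>a b c. if (a, b, c) \<in> \<Phi> then 1 else 0 :: 'f) = \<Phi>"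
    by (auto simp: tsupp_def)
  then have "\<exists>r t :: 'a \<Rightarrow> 'b \<Rightarrow> 'c \<Rightarrow> 'f. tsupp t = \<Phi> \<and> tensor_rank t = r"
    by blast
  from LeastI_ex[OF this] that show ?thesis
    unfolding support_rank_def by blast
qed

lemma support_rank_le_tensor_rank:
  fixes t :: "'a \<Rightarrow> 'b \<Rightarrow> 'c \<Rightarrow> 'f::field"
  assumes "tsupp t = \<Phi>"
  shows "support_rank TYPE('f) \<Phi> \<le> tensor_rank t"
  unfolding support_rank_def using assms by (intro Least_le) blast

definition tensor_pushforward ::
    "'a set \<Rightarrow> 'b set \<Rightarrow> 'c set \<Rightarrow> ('a \<Rightarrow> 'a2) \<Rightarrow> ('b \<Rightarrow> 'b2) \<Rightarrow> ('c \<Rightarrow> 'c2) \<Rightarrow>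
     ('a \<Rightarrow> 'b \<Rightarrow> 'c \<Rightarrow> 'f::comm_monoid_add) \<Rightarrow> 'a2 \<Rightarrow> 'b2 \<Rightarrow> 'c2 \<Rightarrow> 'f" where
  "tensor_pushforward X Y Z p q s t a' b' c' =
     (\<Sum>a | a \<in> X \<and> p a = a'. \<Sum>b | b \<in> Y \<and> q b = b'. \<Sum>c | c \<in> Z \<and> s c = c'. t a b c)"

lemma tensor_rank_pushforward_le:
  fixes t :: "'a \<Rightarrow> 'b \<Rightarrow> 'c \<Rightarrow> 'f::field"
  assumes "finite (tsupp t)"
  shows "tensor_rank (tensor_pushforward X Y Z p q s t) \<le> tensor_rank t"
proof -
  obtain u v w where t: "\<And>a b c. t a b c = (\<Sum>l<tensor_rank t. u l a * v l b * w l c)"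
    using tensor_rank_decomposition[OF assms] by blast
  show ?thesis
  proof (rule tensor_rank_le)
    fix a' b' c'
    let ?A = "{a \<in> X. p a = a'}" and ?B = "{b \<in> Y. q b = b'}" and ?C = "{c \<in> Z. s c = c'}"
    have "tensor_pushforward X Y Z p q s t a' b' c' =
        (\<Sum>a\<in>?A. \<Sum>b\<in>?B. \<Sum>c\<in>?C. \<Sum>l<tensor_rank t. u l a * v l b * w l c)"
      by (simp add: tensor_pushforward_def t)
    also have "\<dots> = (\<Sum>a\<in>?A. \<Sum>b\<in>?B. \<Sum>l<tensor_rank t. \<Sum>c\<in>?C. u l a * v l b * w l c)"
      by (intro sum.cong refl sum.swap)
    also have "\<dots> = (\<Sum>a\<in>?A. \<Sum>l<tensor_rank t. \<Sum>b\<in>?B. \<Sum>c\<in>?C. u l a * v l b * w l c)"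
      by (intro sum.cong refl sum.swap)
    also have "\<dots> = (\<Sum>l<tensor_rank t. \<Sum>a\<in>?A. \<Sum>b\<in>?B. \<Sum>c\<in>?C. u l a * v l b * w l c)"
      by (rule sum.swap)
    also have "\<dots> = (\<Sum>l<tensor_rank t. (\<Sum>a\<in>?A. u l a) * (\<Sum>b\<in>?B. v l b) * (\<Sum>c\<in>?C. w l c))"
      by (simp only: sum_distrib_left[symmetric] sum_distrib_right[symmetric])
    finally show "tensor_pushforward X Y Z p q s t a' b' c' =
        (\<Sum>l<tensor_rank t. (\<Sum>a\<in>?A. u l a) * (\<Sum>b\<in>?B. v l b) * (\<Sum>c\<in>?C. w l c))" .
  qed
qed

lemma tensor_rank_scale_le:
  fixes t :: "'a \<Rightarrow> 'b \<Rightarrow> 'c \<Rightarrow> 'f::field"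
  assumes "finite (tsupp t)"
  shows "tensor_rank (\<lambda>a b c. \<alpha> a * \<beta> b * \<gamma> c * t a b c) \<le> tensor_rank t"
proof -
  obtain u v w where t: "\<And>a b c. t a b c = (\<Sum>l<tensor_rank t. u l a * v l b * w l c)"
    using tensor_rank_decomposition[OF assms] by blast
  show ?thesis
    by (rule tensor_rank_le[where u = "\<lambda>l a. \<alpha> a * u l a" and v = "\<lambda>l b. \<beta> b * v l b"
          and w = "\<lambda>l c. \<gamma> c * w l c"])
      (simp add: t sum_distrib_left mult_ac)
qed

lemma tensor_pushforward_eq_fibre_sum:
  assumes "finite X" "finite Y" "finite Z" "tsupp t \<subseteq> S" "S \<subseteq> X \<times> Y \<times> Z"
  shows "tensor_pushforward X Y Z p q s t a' b' c' =
    (\<Sum>(a, b, c) \<in> {\<phi> \<in> S. map_prod p (map_prod q s) \<phi> = (a', b', c')}. t a b c)"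
proof -
  have "tensor_pushforward X Y Z p q s t a' b' c' =
      (\<Sum>(a, b, c) \<in> {a \<in> X. p a = a'} \<times> {b \<in> Y. q b = b'} \<times> {c \<in> Z. s c = c'}. t a b c)"
    by (simp add: tensor_pushforward_def sum.cartesian_product)
  also have "\<dots> = (\<Sum>(a, b, c) \<in> {\<phi> \<in> S. map_prod p (map_prod q s) \<phi> = (a', b', c')}. t a b c)"
  proof (rule sum.mono_neutral_right)
    show "finite ({a \<in> X. p a = a'} \<times> {b \<in> Y. q b = b'} \<times> {c \<in> Z. s c = c'})"
      using assms(1-3) by simp
    show "{\<phi> \<in> S. map_prod p (map_prod q s) \<phi> = (a', b', c')}
        \<subseteq> {a \<in> X. p a = a'} \<times> {b \<in> Y. q b = b'} \<times> {c \<in> Z. s c = c'}"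
      using assms(5) by auto
    show "\<forall>\<phi> \<in> {a \<in> X. p a = a'} \<times> {b \<in> Y. q b = b'} \<times> {c \<in> Z. s c = c'}
        - {\<phi> \<in> S. map_prod p (map_prod q s) \<phi> = (a', b', c')}.
        (case \<phi> of (a, b, c) \<Rightarrow> t a b c) = 0"
      using assms(4) by (auto simp: tsupp_def)
  qed
  finally show ?thesis .
qed

lemma sum_monom_neq_zero:
  fixes c :: "'s \<Rightarrow> 'f::comm_ring_1"
  assumes "finite S" "s0 \<in> S" "inj_on e S" "\<forall>s\<in>S. c s \<noteq> 0"
  shows "(\<Sum>s\<in>S. monom (c s) (e s)) \<noteq> 0"
proof -
  have "coeff (\<Sum>s\<in>S. monom (c s) (e s)) (e s0) = (\<Sum>s\<in>S. if s = s0 then c s else 0)"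
    using assms(2,3) by (auto simp: coeff_sum inj_on_eq_iff intro: sum.cong)
  also have "\<dots> = c s0"
    using assms(1,2) by simp
  finally show ?thesis
    using assms(2,4) by auto
qed

lemma infinite_UNIV_common_nonroot:
  fixes P :: "'x \<Rightarrow> 'f::idom poly"
  assumes "infinite (UNIV :: 'f set)" "finite A" "\<forall>a\<in>A. P a \<noteq> 0"
  obtains x where "\<forall>a\<in>A. poly (P a) x \<noteq> 0"
proof -
  have "finite (\<Union>a\<in>A. {x. poly (P a) x = 0})"
    using assms(2,3) poly_roots_finite by blast
  with assms(1) obtain x where "x \<notin> (\<Union>a\<in>A. {x. poly (P a) x = 0})"
    using ex_new_if_finite by blast
  with that show ?thesis by blast
qed

lemma exists_nonvanishing_fibre_sums:
  fixes c :: "'s \<Rightarrow> 'f::idom"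
  assumes "infinite (UNIV :: 'f set)" "finite S" "inj_on e S" "\<forall>s\<in>S. c s \<noteq> 0"
  obtains x where "\<forall>s0\<in>S. (\<Sum>s \<in> {s \<in> S. F s = F s0}. c s * x ^ e s) \<noteq> 0"
proof -
  define P where "P s0 = (\<Sum>s \<in> {s \<in> S. F s = F s0}. monom (c s) (e s))" for s0
  have "P s0 \<noteq> 0" if "s0 \<in> S" for s0
    unfolding P_def using assms(2-4) that
    by (intro sum_monom_neq_zero) (auto intro: inj_on_subset)
  then obtain x where "\<forall>s0\<in>S. poly (P s0) x \<noteq> 0"
    using infinite_UNIV_common_nonroot[OF assms(1,2)] by blast
  with that show ?thesis
    by (simp add: P_def poly_sum poly_monom)
qed

lemma exists_inj_on_additive_encoding:
  fixes A :: "('x \<times> 'y) set"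
  assumes "finite A"
  obtains a :: "'x \<Rightarrow> nat" and b :: "'y \<Rightarrow> nat" where "inj_on (\<lambda>(x, y). a x + b y) A"
proof -
  obtain a :: "'x \<Rightarrow> nat" and M where a: "a ` fst ` A = {i. i < M}" "inj_on a (fst ` A)"
    using finite_imp_inj_to_nat_seg[of "fst ` A"] assms by blast
  obtain k :: "'y \<Rightarrow> nat" where k: "inj_on k (snd ` A)"
    using finite_imp_inj_to_nat_seg[of "snd ` A"] assms by blast
  have "inj_on (\<lambda>(x, y). a x + M * k y) A"
  proof (rule inj_onI, clarify)
    fix x y x' y'
    assume xy: "(x, y) \<in> A" "(x', y') \<in> A" and eq: "a x + M * k y = a x' + M * k y'"
    have "a x < M" "a x' < M"
      using a(1) xy by force+
    then have "a x = a x'" "k y = k y'"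
      using arg_cong[OF eq, of "\<lambda>n. n mod M"] arg_cong[OF eq, of "\<lambda>n. n div M"] by auto
    then show "x = x' \<and> y = y'"
      using a(2) k xy by (force dest: inj_onD)
  qed
  then show ?thesis
    by (intro that[of a "\<lambda>y. M * k y"])
qed

lemma tsupp_pushforward_eq_image:
  assumes "finite X" "finite Y" "finite Z" "tsupp t \<subseteq> \<Phi>" "\<Phi> \<subseteq> X \<times> Y \<times> Z"
    and no_cancellation: "\<forall>\<phi>0\<in>\<Phi>.
      (\<Sum>(a, b, c) \<in> {\<phi> \<in> \<Phi>. map_prod p (map_prod q s) \<phi> = map_prod p (map_prod q s) \<phi>0}. t a b c) \<noteq> 0"
  shows "tsupp (tensor_pushforward X Y Z p q s t) = map_prod p (map_prod q s) ` \<Phi>"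
proof -
  have "tensor_pushforward X Y Z p q s t a' b' c' \<noteq> 0 \<longleftrightarrow>
      (a', b', c') \<in> map_prod p (map_prod q s) ` \<Phi>" for a' b' c'
  proof (cases "(a', b', c') \<in> map_prod p (map_prod q s) ` \<Phi>")
    case True
    then obtain \<phi>0 where \<phi>0: "\<phi>0 \<in> \<Phi>" "map_prod p (map_prod q s) \<phi>0 = (a', b', c')"
      by auto
    show ?thesis
      using True bspec[OF no_cancellation \<phi>0(1)] \<phi>0(2)
      by (simp add: tensor_pushforward_eq_fibre_sum[OF assms(1-5)])
  next
    case False
    then have empty_fibre: "{\<phi> \<in> \<Phi>. map_prod p (map_prod q s) \<phi> = (a', b', c')} = {}"
      by force
    show ?thesis
      unfolding tensor_pushforward_eq_fibre_sum[OF assms(1-5)] empty_fibre using False by simp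
  qed
  then show ?thesis
    by (auto simp: tsupp_def)
qed

lemma support_rank_image_le:
  fixes \<Phi> :: "('a \<times> 'b \<times> 'c) set"
    and p :: "'a \<Rightarrow> 'a2" and q :: "'b \<Rightarrow> 'b2" and s :: "'c \<Rightarrow> 'c2"
  assumes "infinite (UNIV :: 'f::field set)" "finite \<Phi>" "inj_on (\<lambda>(x, y, z). (x, y)) \<Phi>"
  shows "support_rank TYPE('f) (map_prod p (map_prod q s) ` \<Phi>) \<le> support_rank TYPE('f) \<Phi>"
proof -
  let ?F = "map_prod p (map_prod q s)"
  obtain T :: "'a \<Rightarrow> 'b \<Rightarrow> 'c \<Rightarrow> 'f"
    where T: "tsupp T = \<Phi>" "tensor_rank T = support_rank TYPE('f) \<Phi>"
    by (rule support_rank_attained)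
  obtain a :: "'a \<Rightarrow> nat" and b :: "'b \<Rightarrow> nat"
    where ab: "inj_on (\<lambda>(x, y). a x + b y) ((\<lambda>(x, y, z). (x, y)) ` \<Phi>)"
    using exists_inj_on_additive_encoding[of "(\<lambda>(x, y, z). (x, y)) ` \<Phi>"] assms(2) by blast
  define e :: "'a \<times> 'b \<times> 'c \<Rightarrow> nat" where "e = (\<lambda>(x, y, z). a x + b y)"
  have "inj_on e \<Phi>"
    using comp_inj_on[OF assms(3) ab] by (simp add: e_def comp_def split_def)
  moreover have "\<forall>\<phi>\<in>\<Phi>. (case \<phi> of (x, y, z) \<Rightarrow> T x y z) \<noteq> 0"
    using T(1) by (auto simp: tsupp_def)
  ultimately obtain \<xi> where \<xi>: "\<forall>\<phi>0\<in>\<Phi>.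
      (\<Sum>\<phi> \<in> {\<phi> \<in> \<Phi>. ?F \<phi> = ?F \<phi>0}. (case \<phi> of (x, y, z) \<Rightarrow> T x y z) * \<xi> ^ e \<phi>) \<noteq> 0"
    using exists_nonvanishing_fibre_sums[OF assms(1,2)] by blast
  define T' where "T' = (\<lambda>x y z. \<xi> ^ a x * \<xi> ^ b y * T x y z)"
  define X where "X = fst ` \<Phi>"
  define Y where "Y = fst ` snd ` \<Phi>"
  define Z where "Z = snd ` snd ` \<Phi>"
  have XYZ: "finite X" "finite Y" "finite Z" "\<Phi> \<subseteq> X \<times> Y \<times> Z"
    using assms(2) by (force simp: X_def Y_def Z_def)+
  have "tsupp T' \<subseteq> \<Phi>"
    using T(1) by (auto simp: T'_def tsupp_def)
  moreover have "\<forall>\<phi>0\<in>\<Phi>. (\<Sum>(x, y, z) \<in> {\<phi> \<in> \<Phi>. ?F \<phi> = ?F \<phi>0}. T' x y z) \<noteq> 0"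
    using \<xi> by (simp add: T'_def e_def case_prod_beta power_add mult_ac)
  ultimately have "tsupp (tensor_pushforward X Y Z p q s T') = ?F ` \<Phi>"
    using XYZ by (intro tsupp_pushforward_eq_image)
  then have "support_rank TYPE('f) (?F ` \<Phi>) \<le> tensor_rank (tensor_pushforward X Y Z p q s T')"
    by (rule support_rank_le_tensor_rank)
  also have "\<dots> \<le> tensor_rank T'"
    using \<open>tsupp T' \<subseteq> \<Phi>\<close> assms(2) by (intro tensor_rank_pushforward_le) (rule finite_subset)
  also have "\<dots> \<le> tensor_rank T"
    using tensor_rank_scale_le[of T "\<lambda>x. \<xi> ^ a x" "\<lambda>y. \<xi> ^ b y" "\<lambda>_. 1"] T(1) assms(2)
    by (simp add: T'_def)
  finally show ?thesis
    using T(2) by simp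
qed

lemma finite_bracket:
  assumes "finite \<Lambda>"
  shows "finite (bracket \<Lambda>)"
proof -
  have "bracket \<Lambda> = (\<lambda>(i, j, k). ((i, j), (j, k), (k, i))) ` \<Lambda>"
    unfolding bracket_def by force
  with assms show ?thesis
    by simp
qed

lemma inj_on_bracket_first_two: "inj_on (\<lambda>(x, y, z). (x, y)) (bracket \<Lambda>)"
  unfolding bracket_def by (auto intro: inj_onI)

lemma bracket_image:
  "bracket ((\<lambda>(i, j, k). (f i, g j, h k)) ` \<Lambda>) =
    map_prod (map_prod f g) (map_prod (map_prod g h) (map_prod h f)) ` bracket \<Lambda>"
  unfolding bracket_def by force

theorem corollary4p3:
  fixes \<Lambda> :: "('i \<times> 'j \<times> 'k) set"
    and I :: "'i set" and J :: "'j set" and K :: "'k set"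
    and I' :: "'i2 set" and J' :: "'j2 set" and K' :: "'k2 set"
    and f :: "'i \<Rightarrow> 'i2" and g :: "'j \<Rightarrow> 'j2" and h :: "'k \<Rightarrow> 'k2"
  assumes "infinite (UNIV :: 'f::field set)"
    and "finite I" "finite J" "finite K" "finite I'" "finite J'" "finite K'"
    and "\<Lambda> \<subseteq> I \<times> J \<times> K"
    and "f ` I \<subseteq> I'" "g ` J \<subseteq> J'" "h ` K \<subseteq> K'"
  shows "support_rank TYPE('f) (bracket \<Lambda>)
           \<ge> support_rank TYPE('f) (bracket ((\<lambda>(i, j, k). (f i, g j, h k)) ` \<Lambda>))"
proof -
  have "finite \<Lambda>"
    using assms(2-4,8) by (blast intro: finite_subset)
  then show ?thesis
    unfolding bracket_image
    by (intro support_rank_image_le assms(1) finite_bracket inj_on_bracket_first_two)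
qed

end
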